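(* Let $\Delta t>0$, $N\in\mathbb{N}$, $t_i=i\,\Delta t$ for $i=0,\dots,N$, and let $U\subseteq\mathbb{R}^m$. Let $f:[0,T]\times\mathbb{R}^n\times U\to\mathbb{R}^n$, $\sigma:[0,T]\times\mathbb{R}^n\to\mathbb{R}^{n\times n}$, $\ell:[0,T]\times\mathbb{R}^n\times U\to\mathbb{R}_+$, $g:\mathbb{R}^n\to\mathbb{R}_+$, and let $\mu_i:\mathbb{R}^n\to U$ ($i=0,\dots,N-1$) be a policy. On a probability space with measure $\widetilde{\mathsf{Q}}$, let $W_0^{\mathsf{Q}},\dots,W_{N-1}^{\mathsf{Q}}$ be mutually independent $\mathcal{N}(0,I_n)$ random vectors, and define $X_0=x_0\in\mathbb{R}^n$ and $$X_{i+1}=X_i+F^\mu_i+\Sigma_i W^{\mathsf{Q}}_i,\qquad F^\mu_i=f(t_i,X_i,\mu_i(X_i))\Delta t,\quad \Sigma_i=\sigma(t_i,X_i)\sqrt{\Delta t}.$$ Let $L^\mu_j=\ell(t_j,X_j,\mu_j(X_j))\Delta t$, let $V^\mu_i$ be the on-policy value function $V^\mu_i(X_i)=\mathbf{E}_{\widetilde{\mathsf{Q}}}[\sum_{j=i}^{N-1}L^\mu_j+g(X_N)\mid X_i]$, $Y_i:=V^\mu_i(X_i)$ and $\Delta Y_i:=Y_{i+1}-Y_i$. Fix $i\in\{0,\dots,N-1\}$ and let $\widetilde V_{i+1}:\mathbb{R}^n\to\mathbb{R}$ be a $C^2$ function (an approximation of $V^\mu_{i+1}$). Set $\overline X_{i+1}:=X_i+F^\mu_i$,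 $$\overline Y_{i+1}:=\widetilde V_{i+1}(\overline X_{i+1}),\quad \overline Z_{i+1}:=\Sigma_i^\top\partial_x\widetilde V_{i+1}(\overline X_{i+1}),\quad \overline M_{i+1}:=\Sigma_i^\top\partial_{xx}\widetilde V_{i+1}(\overline X_{i+1})\Sigma_i,$$ $\widetilde Y_{i+1}:=\overline Y_{i+1}+\overline Z_{i+1}^\top W^{\mathsf{Q}}_i+\tfrac12 W^{\mathsf{Q}\top}_i\overline M_{i+1}W^{\mathsf{Q}}_i$, $\delta^{\mathrm{h.o.t.}}_{i+1}:=\widetilde V_{i+1}(X_{i+1})-\widetilde Y_{i+1}$, $\delta^{\widetilde V}_{i+1}:=V^\mu_{i+1}(X_{i+1})-\widetilde V_{i+1}(X_{i+1})$ and $\delta^{\Delta\widehat Y}_{i+1}:=\delta^{\widetilde V}_{i+1}+\delta^{\mathrm{h.o.t.}}_{i+1}$. Define the estimator $$\Delta\widehat Y_i:=-L^\mu_i+\overline Z_{i+1}^\top W^{\mathsf{Q}}_i+\tfrac12\operatorname{tr}\big(\overline M_{i+1}(W^{\mathsf{Q}}_iW^{\mathsf{Q}\top}_i-I)\big).$$ Then $\Delta\widehat Y_i$ is an unbiased estimator of $\Delta Y_i$, i.e. $\mathbf{E}_{\widetilde{\mathsf{Q}}}[\Delta\widehat Y_i\mid X_i]=\mathbf{E}_{\widetilde{\mathsf{Q}}}[\Delta Y_i\mid X_i]$, and the residual error is $$\Delta Y_i-\Delta\widehat Y_i=\delta^{\Delta\widehat Y}_{i+1}-\mathbf{E}_{\widetilde{\mathsf{Q}}}[\delta^{\Delta\widehat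 Y}_{i+1}\mid X_i].$$
   Context: $T=N\Delta t$. $\partial_x$ denotes the gradient and $\partial_{xx}$ the Hessian with respect to $x$. All random variables whose (conditional) expectations appear are assumed integrable. Note that $W^{\mathsf{Q}}_i$ is independent of $X_i$ (which depends only on $x_0,W^{\mathsf{Q}}_0,\dots,W^{\mathsf{Q}}_{i-1}$). *)

theory Defs
  imports "HOL-Analysis.Analysis" "HOL-Probability.Probability"
begin

fun Xpath :: "real \<Rightarrow> (real \<Rightarrow> real^'n \<Rightarrow> 'u \<Rightarrow> real^'n) \<Rightarrow> (real \<Rightarrow> real^'n \<Rightarrow> real^'n^'n)
   \<Rightarrow> (nat \<Rightarrow> real^'n \<Rightarrow> 'u) \<Rightarrow> real^'n \<Rightarrow> (nat \<Rightarrow> 'a \<Rightarrow> real^'n) \<Rightarrow> nat \<Rightarrow> 'a \<Rightarrow> real^'n" where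
  "Xpath dt f \<sigma> \<mu> x0 W 0 \<omega> = x0"
| "Xpath dt f \<sigma> \<mu> x0 W (Suc i) \<omega> =
     (let x = Xpath dt f \<sigma> \<mu> x0 W i \<omega>
      in x + dt *\<^sub>R f (real i * dt) x (\<mu> i x) + (sqrt dt *\<^sub>R \<sigma> (real i * dt) x) *v W i \<omega>)"

definition cond_exp_given :: "'a measure \<Rightarrow> ('a \<Rightarrow> 'b::topological_space) \<Rightarrow> ('a \<Rightarrow> real) \<Rightarrow> 'a \<Rightarrow> real" where
  "cond_exp_given M X Z = real_cond_exp M (vimage_algebra (space M) X borel) Z"

definition outer :: "real^'n \<Rightarrow> real^'n \<Rightarrow> real^'n^'n" where
  "outer v w = (\<chi> a b. v $ a * w $ b)"

end

theory Submission
  imports Defs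
begin

(* Both conditional expectations given X_i are computed by integrating out noise that is
   independent of X_i.  As W_i is standard normal and independent of X_i, the quadratic model
   Ytil = Ybar + Zbar.W_i + W_i.Mbar W_i / 2 satisfies E[Ytil | X_i] = Ybar + tr Mbar / 2.
   The cost-to-go from step i+1 is a functional of X_{i+1} and of the noise after step i, which
   is independent of (X_i, W_i); this gives the Markov identity E[Y_{i+1} | X_i] = Y_i - L_i.
   Hence E[delta | X_i] = Y_i - L_i - Ybar - tr Mbar / 2, and since
   tr (Mbar (W W^T - I)) = W.Mbar W - tr Mbar, this is exactly delta - (Delta Y - Delta Yhat).
   Unbiasedness follows by conditioning this residual identity on X_i. *)

lemma borel_measurable_vec_components:
  fixes F :: "'q \<Rightarrow> 'a::euclidean_space^'n"
  assumes "\<And>k. (\<lambda>q. F q $ k) \<in> borel_measurable Q"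
  shows "F \<in> borel_measurable Q"
proof (rule borel_measurable_euclidean_space[THEN iffD2], rule ballI)
  fix b :: "'a^'n" assume "b \<in> Basis"
  then obtain k u where b: "b = axis k u" "u \<in> Basis" by (auto simp: Basis_vec_def)
  have "(\<lambda>q. F q \<bullet> b) = (\<lambda>q. F q $ k \<bullet> u)" by (simp add: b inner_axis)
  then show "(\<lambda>q. F q \<bullet> b) \<in> borel_measurable Q" using assms by (simp add: borel_measurable_inner)
qed

lemma borel_measurable_vec_nth_compose[measurable]:
  fixes F :: "'q \<Rightarrow> 'a::euclidean_space^'n"
  assumes "F \<in> borel_measurable Q"
  shows "(\<lambda>q. F q $ k) \<in> borel_measurable Q"
proof (rule borel_measurable_euclidean_space[THEN iffD2], rule ballI)
  fix u :: 'a assume "u \<in> Basis"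
  have "(\<lambda>q. F q \<bullet> axis k u) \<in> borel_measurable Q" using assms by (intro borel_measurable_inner) auto
  then show "(\<lambda>q. F q $ k \<bullet> u) \<in> borel_measurable Q" by (simp add: inner_axis)
qed

lemma borel_measurable_matrix_vector_mult[measurable]:
  fixes A :: "'q \<Rightarrow> real^'n^'k" and v :: "'q \<Rightarrow> real^'n"
  assumes "A \<in> borel_measurable Q" "v \<in> borel_measurable Q"
  shows "(\<lambda>q. A q *v v q) \<in> borel_measurable Q"
  by (rule borel_measurable_vec_components) (use assms in \<open>simp add: matrix_vector_mult_def\<close>)

lemma borel_measurable_matrix_matrix_mult[measurable]:
  fixes A :: "'q \<Rightarrow> real^'n^'k" and B :: "'q \<Rightarrow> real^'l^'n"
  assumes "A \<in> borel_measurable Q" "B \<in> borel_measurable Q"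
  shows "(\<lambda>q. A q ** B q) \<in> borel_measurable Q"
  by (intro borel_measurable_vec_components) (use assms in \<open>simp add: matrix_matrix_mult_def\<close>)

lemma borel_measurable_transpose[measurable]:
  fixes A :: "'q \<Rightarrow> real^'n^'k"
  assumes "A \<in> borel_measurable Q"
  shows "(\<lambda>q. transpose (A q)) \<in> borel_measurable Q"
  by (intro borel_measurable_vec_components) (use assms in \<open>simp add: transpose_def\<close>)

lemma borel_measurable_uncurry2_compose:
  fixes F :: "'t::second_countable_topology \<Rightarrow> 'x::second_countable_topology \<Rightarrow> 'z::topological_space"
  assumes "(\<lambda>(t, x). F t x) \<in> borel_measurable borel"
    and "a \<in> borel_measurable Q" "b \<in> borel_measurable Q"
  shows "(\<lambda>q. F (a q) (b q)) \<in> borel_measurable Q"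
  using measurable_compose[OF borel_measurable_Pair[OF assms(2,3)] assms(1)] by simp

lemma borel_measurable_uncurry3_compose:
  fixes F :: "'t::second_countable_topology \<Rightarrow> 'x::second_countable_topology
      \<Rightarrow> 'y::second_countable_topology \<Rightarrow> 'z::topological_space"
  assumes "(\<lambda>(t, x, u). F t x u) \<in> borel_measurable borel"
    and "a \<in> borel_measurable Q" "b \<in> borel_measurable Q" "c \<in> borel_measurable Q"
  shows "(\<lambda>q. F (a q) (b q) (c q)) \<in> borel_measurable Q"
  using measurable_compose[OF borel_measurable_Pair[OF assms(2) borel_measurable_Pair[OF assms(3,4)]]
      assms(1)]
  by simp

lemma borel_measurable_has_derivative:
  assumes "\<And>x. (F has_derivative F' x) (at x)"
  shows "F \<in> borel_measurable borel"
  by (intro borel_measurable_continuous_onI continuous_at_imp_continuous_on ballI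
      has_derivative_continuous[OF assms])

lemma trace_mult_outer_minus_id:
  fixes A :: "real^'n^'n" and w :: "real^'n"
  shows "trace (A ** (outer w w - mat 1)) = w \<bullet> (A *v w) - trace A"
proof -
  have "A ** (outer w w - mat 1) = A ** outer w w - A ** mat 1"
    by (simp add: matrix_matrix_mult_def vec_eq_iff sum_subtractf right_diff_distrib)
  moreover have "trace (A ** outer w w) = w \<bullet> (A *v w)"
    by (simp add: trace_def matrix_matrix_mult_def outer_def inner_vec_def matrix_vector_mult_def
        sum_distrib_left mult_ac)
  ultimately show ?thesis by (simp add: trace_sub)
qed

lemma (in prob_space) sigma_finite_subalgebra_vimage_algebra:
  assumes "Y \<in> measurable M S"
  shows "sigma_finite_subalgebra M (vimage_algebra (space M) Y S)"
proof -
  have "subalgebra M (vimage_algebra (space M) Y S)"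
    unfolding subalgebra_def
    by (auto simp: sets_vimage_algebra2 measurable_space[OF assms] intro: measurable_sets[OF assms])
  then interpret finite_measure_subalgebra M "vimage_algebra (space M) Y S"
    by unfold_locales
  show ?thesis by (rule sigma_finite_subalgebra_axioms)
qed

text \<open>Independence of two random variables with values in different spaces, as a product
  joint distribution; \<^const>\<open>prob_space.indep_var\<close> requires a common value type.\<close>

definition (in prob_space) indep_var_distr ::
    "'b measure \<Rightarrow> ('a \<Rightarrow> 'b) \<Rightarrow> 'c measure \<Rightarrow> ('a \<Rightarrow> 'c) \<Rightarrow> bool" where
  "indep_var_distr S Y T Z \<longleftrightarrow> Y \<in> measurable M S \<and> Z \<in> measurable M T \<and>
     distr M S Y \<Otimes>\<^sub>M distr M T Z = distr M (S \<Otimes>\<^sub>M T) (\<lambda>\<omega>. (Y \<omega>, Z \<omega>))"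

lemma (in prob_space) indep_var_distr_compose:
  assumes indep: "indep_var U A V B" and [measurable]: "\<phi> \<in> measurable U S" "\<psi> \<in> measurable V T"
  shows "indep_var_distr S (\<lambda>\<omega>. \<phi> (A \<omega>)) T (\<lambda>\<omega>. \<psi> (B \<omega>))"
proof -
  have [measurable]: "A \<in> measurable M U" "B \<in> measurable M V"
    using indep by (rule indep_var_rv1, rule indep_var_rv2)
  have joint: "distr M U A \<Otimes>\<^sub>M distr M V B = distr M (U \<Otimes>\<^sub>M V) (\<lambda>\<omega>. (A \<omega>, B \<omega>))"
    using indep unfolding indep_var_distribution_eq by simp
  have "sigma_finite_measure (distr (distr M V B) T \<psi>)"
    by (intro prob_space_imp_sigma_finite prob_space.prob_space_distr prob_space_distr) simp_all
  moreover have "distr M S (\<lambda>\<omega>. \<phi> (A \<omega>)) = distr (distr M U A) S \<phi>"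
    "distr M T (\<lambda>\<omega>. \<psi> (B \<omega>)) = distr (distr M V B) T \<psi>"
    by (subst distr_distr; simp add: comp_def)+
  ultimately have "distr M S (\<lambda>\<omega>. \<phi> (A \<omega>)) \<Otimes>\<^sub>M distr M T (\<lambda>\<omega>. \<psi> (B \<omega>))
      = distr (distr M U A \<Otimes>\<^sub>M distr M V B) (S \<Otimes>\<^sub>M T) (\<lambda>(x, y). (\<phi> x, \<psi> y))"
    using pair_measure_distr[of \<phi> "distr M U A" S \<psi> "distr M V B" T] by simp
  also have "\<dots> = distr M (S \<Otimes>\<^sub>M T) (\<lambda>\<omega>. (\<phi> (A \<omega>), \<psi> (B \<omega>)))"
    unfolding joint by (subst distr_distr) (simp_all add: comp_def)
  finally show ?thesis
    unfolding indep_var_distr_def by (simp add: measurable_compose[OF _ \<open>\<phi> \<in> _\<close>]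
        measurable_compose[OF _ \<open>\<psi> \<in> _\<close>])
qed

lemma (in prob_space) integral_indep_var_distr_iterated:
  fixes h :: "'y \<times> 'z \<Rightarrow> real"
  assumes indep: "indep_var_distr S Y T Z"
    and h[measurable]: "h \<in> borel_measurable (S \<Otimes>\<^sub>M T)"
    and int: "integrable M (\<lambda>\<omega>. h (Y \<omega>, Z \<omega>))"
  shows "integrable M (\<lambda>\<omega>. \<integral>z. h (Y \<omega>, z) \<partial>distr M T Z)"
    and "(\<integral>\<omega>. h (Y \<omega>, Z \<omega>) \<partial>M) = (\<integral>\<omega>. (\<integral>z. h (Y \<omega>, z) \<partial>distr M T Z) \<partial>M)"
proof -
  have [measurable]: "Y \<in> measurable M S" "Z \<in> measurable M T"
    using indep by (simp_all add: indep_var_distr_def)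
  define PY where "PY = distr M S Y"
  let ?PZ = "distr M T Z"
  interpret PY: prob_space PY unfolding PY_def by (rule prob_space_distr) simp
  interpret PZ: prob_space ?PZ by (rule prob_space_distr) simp
  interpret PYZ: pair_sigma_finite PY ?PZ ..
  have joint: "PY \<Otimes>\<^sub>M ?PZ = distr M (S \<Otimes>\<^sub>M T) (\<lambda>\<omega>. (Y \<omega>, Z \<omega>))"
    using indep unfolding PY_def indep_var_distr_def by simp
  have "sets (PY \<Otimes>\<^sub>M ?PZ) = sets (S \<Otimes>\<^sub>M T)"
    by (rule sets_pair_measure_cong) (simp_all add: PY_def)
  then have [measurable]: "h \<in> borel_measurable (PY \<Otimes>\<^sub>M ?PZ)"
    using h measurable_cong_sets by blast
  have int_h: "integrable (PY \<Otimes>\<^sub>M ?PZ) h"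
    unfolding joint by (subst integrable_distr_eq) (simp_all add: int)
  have "integrable PY (\<lambda>y. \<integral>z. h (y, z) \<partial>?PZ)"
    by (rule PYZ.integrable_fst'[OF int_h])
  then show "integrable M (\<lambda>\<omega>. \<integral>z. h (Y \<omega>, z) \<partial>?PZ)"
    unfolding PY_def by (subst (asm) integrable_distr_eq) simp_all
  have "(\<integral>\<omega>. h (Y \<omega>, Z \<omega>) \<partial>M) = (\<integral>p. h p \<partial>(PY \<Otimes>\<^sub>M ?PZ))"
    unfolding joint by (subst integral_distr) simp_all
  also have "\<dots> = (\<integral>y. (\<integral>z. h (y, z) \<partial>?PZ) \<partial>PY)"
    using PYZ.integral_fst'[OF int_h] by simp
  also have "\<dots> = (\<integral>\<omega>. (\<integral>z. h (Y \<omega>, z) \<partial>?PZ) \<partial>M)"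
    unfolding PY_def by (subst integral_distr) simp_all
  finally show "(\<integral>\<omega>. h (Y \<omega>, Z \<omega>) \<partial>M) = (\<integral>\<omega>. (\<integral>z. h (Y \<omega>, z) \<partial>distr M T Z) \<partial>M)" .
qed

lemma (in prob_space) real_cond_exp_vimage_indep:
  fixes h :: "'y \<times> 'z \<Rightarrow> real"
  assumes indep: "indep_var_distr S Y T Z"
    and h[measurable]: "h \<in> borel_measurable (S \<Otimes>\<^sub>M T)"
    and int: "integrable M (\<lambda>\<omega>. h (Y \<omega>, Z \<omega>))"
  shows "AE \<omega> in M. real_cond_exp M (vimage_algebra (space M) Y S) (\<lambda>\<omega>. h (Y \<omega>, Z \<omega>)) \<omega>
            = (\<integral>z. h (Y \<omega>, z) \<partial>distr M T Z)"
proof -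
  have Y[measurable]: "Y \<in> measurable M S" and [measurable]: "Z \<in> measurable M T"
    using indep by (simp_all add: indep_var_distr_def)
  define F where "F = vimage_algebra (space M) Y S"
  define H where "H y = (\<integral>z. h (y, z) \<partial>distr M T Z)" for y
  interpret F: sigma_finite_subalgebra M F
    unfolding F_def by (rule sigma_finite_subalgebra_vimage_algebra[OF Y])
  interpret PZ: prob_space "distr M T Z" by (rule prob_space_distr) simp
  have "sets (S \<Otimes>\<^sub>M distr M T Z) = sets (S \<Otimes>\<^sub>M T)"
    by (rule sets_pair_measure_cong) simp_all
  then have "h \<in> borel_measurable (S \<Otimes>\<^sub>M distr M T Z)"
    using h measurable_cong_sets by blast
  then have [measurable]: "H \<in> borel_measurable S"
    unfolding H_def by measurable
  have "(\<lambda>\<omega>. H (Y \<omega>)) \<in> borel_measurable F"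
    unfolding F_def by (rule measurable_compose[OF measurable_vimage_algebra1])
      (simp_all add: measurable_space[OF Y])
  moreover have "(\<integral>\<omega>\<in>A. h (Y \<omega>, Z \<omega>) \<partial>M) = (\<integral>\<omega>\<in>A. H (Y \<omega>) \<partial>M)" if "A \<in> sets F" for A
  proof -
    obtain B where [measurable]: "B \<in> sets S" and A: "A = Y -` B \<inter> space M"
      using \<open>A \<in> sets F\<close> unfolding F_def by (auto simp: sets_vimage_algebra2 measurable_space[OF Y])
    have ind: "\<And>\<omega>. \<omega> \<in> space M \<Longrightarrow> indicator A \<omega> = (indicator B (Y \<omega>) :: real)"
      unfolding A by (auto split: split_indicator)
    have "A \<in> sets M" unfolding A by measurable
    then have "integrable M (\<lambda>\<omega>. indicator A \<omega> * h (Y \<omega>, Z \<omega>))"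
      using integrable_mult_indicator[OF _ int] by simp
    then have "integrable M (\<lambda>\<omega>. indicator B (fst (Y \<omega>, Z \<omega>)) * h (Y \<omega>, Z \<omega>))"
      by (rule iffD1[OF Bochner_Integration.integrable_cong[OF refl], rotated]) (simp add: ind)
    from integral_indep_var_distr_iterated(2)[OF indep _ this]
    have "(\<integral>\<omega>. indicator B (Y \<omega>) * h (Y \<omega>, Z \<omega>) \<partial>M) = (\<integral>\<omega>. indicator B (Y \<omega>) * H (Y \<omega>) \<partial>M)"
      by (simp add: H_def)
    then show ?thesis
      unfolding set_lebesgue_integral_def
      by (simp add: ind mult.commute[of "indicator A _"] cong: Bochner_Integration.integral_cong)
  qed
  moreover have "integrable M (\<lambda>\<omega>. H (Y \<omega>))"
    unfolding H_def by (rule integral_indep_var_distr_iterated(1)[OF indep h int])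
  ultimately have "AE \<omega> in M. real_cond_exp M F (\<lambda>\<omega>. h (Y \<omega>, Z \<omega>)) \<omega> = H (Y \<omega>)"
    using int by (intro F.real_cond_exp_charact) auto
  then show ?thesis unfolding F_def H_def .
qed

lemma (in prob_space) real_cond_exp_vimage_tower:
  assumes Z: "Z \<in> measurable M S" and \<phi>: "\<phi> \<in> measurable S T" and int: "integrable M C"
  shows "AE \<omega> in M. real_cond_exp M (vimage_algebra (space M) (\<lambda>\<omega>. \<phi> (Z \<omega>)) T)
      (real_cond_exp M (vimage_algebra (space M) Z S) C) \<omega>
    = real_cond_exp M (vimage_algebra (space M) (\<lambda>\<omega>. \<phi> (Z \<omega>)) T) C \<omega>"
proof (rule sigma_finite_subalgebra.real_cond_exp_nested_subalg[OF _ _ _ int])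
  show "sigma_finite_subalgebra M (vimage_algebra (space M) (\<lambda>\<omega>. \<phi> (Z \<omega>)) T)"
    using measurable_compose[OF Z \<phi>] by (rule sigma_finite_subalgebra_vimage_algebra)
  show "subalgebra M (vimage_algebra (space M) Z S)"
    using sigma_finite_subalgebra_vimage_algebra[OF Z] by (simp add: sigma_finite_subalgebra_def)
  have \<phi>Z: "(\<lambda>\<omega>. \<phi> (Z \<omega>)) \<in> measurable (vimage_algebra (space M) Z S) T"
    using measurable_compose[OF measurable_vimage_algebra1 \<phi>] measurable_space[OF Z] by blast
  show "subalgebra (vimage_algebra (space M) Z S) (vimage_algebra (space M) (\<lambda>\<omega>. \<phi> (Z \<omega>)) T)"
    unfolding subalgebra_def
    using measurable_sets[OF \<phi>Z] measurable_space[OF measurable_compose[OF Z \<phi>]]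
    by (auto simp: sets_vimage_algebra2)
qed

lemma (in sigma_finite_subalgebra) real_cond_exp_eq_of_centred_residual:
  assumes D: "integrable M D" and D': "integrable M D'" and \<delta>: "integrable M \<delta>"
    and residual: "AE \<omega> in M. D \<omega> - D' \<omega> = \<delta> \<omega> - real_cond_exp M F \<delta> \<omega>"
  shows "AE \<omega> in M. real_cond_exp M F D' \<omega> = real_cond_exp M F D \<omega>"
proof -
  have E\<delta>: "integrable M (real_cond_exp M F \<delta>)" using \<delta> by (rule real_cond_exp_int(1))
  have [measurable]: "D \<in> borel_measurable M" "D' \<in> borel_measurable M" "\<delta> \<in> borel_measurable M"
    using D D' \<delta> by (simp_all add: borel_measurable_integrable)
  have "AE \<omega> in M. real_cond_exp M F D' \<omega>
      = real_cond_exp M F (\<lambda>\<omega>. D \<omega> - (\<delta> \<omega> - real_cond_exp M F \<delta> \<omega>)) \<omega>"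
    using residual by (intro real_cond_exp_cong) (auto intro: borel_measurable_cond_exp2)
  moreover have "AE \<omega> in M. real_cond_exp M F (\<lambda>\<omega>. D \<omega> - (\<delta> \<omega> - real_cond_exp M F \<delta> \<omega>)) \<omega>
      = real_cond_exp M F D \<omega> - real_cond_exp M F (\<lambda>\<omega>. \<delta> \<omega> - real_cond_exp M F \<delta> \<omega>) \<omega>"
    using D \<delta> E\<delta> by (intro real_cond_exp_diff) auto
  moreover have "AE \<omega> in M. real_cond_exp M F (\<lambda>\<omega>. \<delta> \<omega> - real_cond_exp M F \<delta> \<omega>) \<omega>
      = real_cond_exp M F \<delta> \<omega> - real_cond_exp M F (real_cond_exp M F \<delta>) \<omega>"
    using \<delta> E\<delta> by (rule real_cond_exp_diff)
  moreover have "AE \<omega> in M. real_cond_exp M F (real_cond_exp M F \<delta>) \<omega> = real_cond_exp M F \<delta> \<omega>"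
    using E\<delta> by (rule real_cond_exp_F_meas) (rule borel_measurable_cond_exp)
  ultimately show ?thesis by auto
qed

lemma (in prob_space) std_normal_moments:
  assumes "distributed M lborel Z std_normal_density"
  shows "integrable M Z" and "expectation Z = 0"
    and "integrable M (\<lambda>\<omega>. Z \<omega> * Z \<omega>)" and "expectation (\<lambda>\<omega>. Z \<omega> * Z \<omega>) = 1"
proof -
  show "integrable M Z"
    using distributed_integrable[OF assms, of "\<lambda>x. x"] integrable_std_normal_moment[of 1] by simp
  show "expectation Z = 0"
    using distributed_integral[OF assms, of "\<lambda>x. x"] integral_std_normal_moment_odd[of 0] by simp
  show "integrable M (\<lambda>\<omega>. Z \<omega> * Z \<omega>)"
    using distributed_integrable[OF assms, of "\<lambda>x. x^2"] integrable_std_normal_moment[of 2]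
    by (simp add: power2_eq_square)
  show "expectation (\<lambda>\<omega>. Z \<omega> * Z \<omega>) = 1"
    using distributed_integral[OF assms, of "\<lambda>x. x^2"] integral_std_normal_moment_even[of 1]
    by (simp add: power2_eq_square)
qed

context prob_space
begin

context
  fixes w :: "'a \<Rightarrow> real^'n"
  assumes normal: "\<And>k. distributed M lborel (\<lambda>\<omega>. w \<omega> $ k) std_normal_density"
    and indep: "\<And>k l. k \<noteq> l \<Longrightarrow> indep_var borel (\<lambda>\<omega>. w \<omega> $ k) borel (\<lambda>\<omega>. w \<omega> $ l)"
begin

lemma std_normal_vector_product_moments:
  shows "integrable M (\<lambda>\<omega>. w \<omega> $ k * w \<omega> $ l)"
    and "expectation (\<lambda>\<omega>. w \<omega> $ k * w \<omega> $ l) = (if k = l then 1 else 0)"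
  using std_normal_moments[OF normal] indep_var_integrable[OF indep]
    indep_var_lebesgue_integral[OF indep]
  by (cases "k = l"; simp)+

lemma std_normal_vector_quadratic:
  fixes z :: "real^'n" and A :: "real^'n^'n"
  shows "integrable M (\<lambda>\<omega>. c + z \<bullet> w \<omega> + 1/2 * (w \<omega> \<bullet> (A *v w \<omega>)))"
    and "expectation (\<lambda>\<omega>. c + z \<bullet> w \<omega> + 1/2 * (w \<omega> \<bullet> (A *v w \<omega>))) = c + 1/2 * trace A"
proof -
  have expand: "(\<lambda>\<omega>. c + z \<bullet> w \<omega> + 1/2 * (w \<omega> \<bullet> (A *v w \<omega>))) =
     (\<lambda>\<omega>. c + (\<Sum>k\<in>UNIV. z $ k * w \<omega> $ k)
        + 1/2 * (\<Sum>k\<in>UNIV. \<Sum>l\<in>UNIV. A $ k $ l * (w \<omega> $ k * w \<omega> $ l)))"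
    by (rule ext) (auto simp: inner_vec_def matrix_vector_mult_def sum_distrib_left mult.assoc
        mult.left_commute)
  note moments = std_normal_moments[OF normal] std_normal_vector_product_moments
  show "integrable M (\<lambda>\<omega>. c + z \<bullet> w \<omega> + 1/2 * (w \<omega> \<bullet> (A *v w \<omega>)))"
    unfolding expand using moments by auto
  have "expectation (\<lambda>\<omega>. c + (\<Sum>k\<in>UNIV. z $ k * w \<omega> $ k)
        + 1/2 * (\<Sum>k\<in>UNIV. \<Sum>l\<in>UNIV. A $ k $ l * (w \<omega> $ k * w \<omega> $ l)))
      = c + (\<Sum>k\<in>UNIV. z $ k * expectation (\<lambda>\<omega>. w \<omega> $ k))
        + 1/2 * (\<Sum>k\<in>UNIV. \<Sum>l\<in>UNIV. A $ k $ l * expectation (\<lambda>\<omega>. w \<omega> $ k * w \<omega> $ l))"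
    using moments by (simp add: integral_sum integrable_sum prob_space)
  also have "\<dots> = c + 1/2 * trace A"
    by (simp add: moments trace_def if_distrib cong: if_cong)
  finally show "expectation (\<lambda>\<omega>. c + z \<bullet> w \<omega> + 1/2 * (w \<omega> \<bullet> (A *v w \<omega>))) = c + 1/2 * trace A"
    unfolding expand .
qed

end

end

fun em_flow :: "real \<Rightarrow> (real \<Rightarrow> real^'n \<Rightarrow> 'u \<Rightarrow> real^'n) \<Rightarrow> (real \<Rightarrow> real^'n \<Rightarrow> real^'n^'n)
   \<Rightarrow> (nat \<Rightarrow> real^'n \<Rightarrow> 'u) \<Rightarrow> nat \<Rightarrow> real^'n \<Rightarrow> (nat \<Rightarrow> real^'n) \<Rightarrow> nat \<Rightarrow> real^'n" where
  "em_flow dt f \<sigma> \<mu> s x w 0 = x"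
| "em_flow dt f \<sigma> \<mu> s x w (Suc m) =
     (let y = em_flow dt f \<sigma> \<mu> s x w m
      in y + dt *\<^sub>R f (real (s + m) * dt) y (\<mu> (s + m) y)
           + (sqrt dt *\<^sub>R \<sigma> (real (s + m) * dt) y) *v w (s + m))"

lemma Xpath_add:
  "Xpath dt f \<sigma> \<mu> x0 W (s + m) \<omega> = em_flow dt f \<sigma> \<mu> s (Xpath dt f \<sigma> \<mu> x0 W s \<omega>) (\<lambda>j. W j \<omega>) m"
  by (induction m) (simp_all add: Let_def)

lemma em_flow_cong:
  "(\<And>j. s \<le> j \<Longrightarrow> j < s + m \<Longrightarrow> w j = w' j) \<Longrightarrow> em_flow dt f \<sigma> \<mu> s x w m = em_flow dt f \<sigma> \<mu> s x w' m"
  by (induction m) (simp_all add: Let_def)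

definition noise_at :: "(nat \<times> 'n \<Rightarrow> real) \<Rightarrow> nat \<Rightarrow> real^'n::finite" where
  "noise_at r j = (\<chi> k. r (j, k))"

lemma borel_measurable_noise_at:
  fixes r :: "'q \<Rightarrow> nat \<times> 'n::finite \<Rightarrow> real"
  assumes r: "r \<in> measurable Q (PiM I (\<lambda>_. borel))" and j: "{j} \<times> UNIV \<subseteq> I"
  shows "(\<lambda>q. noise_at (r q) j) \<in> borel_measurable Q"
proof (rule borel_measurable_vec_components)
  fix k
  have "(j, k) \<in> I" using j by auto
  then show "(\<lambda>q. noise_at (r q) j $ k) \<in> borel_measurable Q"
    using measurable_compose[OF r measurable_component_singleton, of "(j, k)"]
    by (simp add: noise_at_def)
qed

lemma borel_measurable_em_flow:
  fixes f :: "real \<Rightarrow> real^'n \<Rightarrow> real^'m \<Rightarrow> real^'n" and \<sigma> :: "real \<Rightarrow> real^'n \<Rightarrow> real^'n^'n"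
    and \<mu> :: "nat \<Rightarrow> real^'n \<Rightarrow> real^'m" and r :: "'q \<Rightarrow> nat \<times> 'n \<Rightarrow> real"
  assumes f: "(\<lambda>(t, x, u). f t x u) \<in> borel_measurable borel"
    and \<sigma>: "(\<lambda>(t, x). \<sigma> t x) \<in> borel_measurable borel"
    and a: "a \<in> borel_measurable Q" and r: "r \<in> measurable Q (PiM I (\<lambda>_. borel))"
  shows "(\<And>j. s \<le> j \<Longrightarrow> j < s + m \<Longrightarrow> \<mu> j \<in> borel_measurable borel) \<Longrightarrow>
    {s..<s + m} \<times> UNIV \<subseteq> I \<Longrightarrow> (\<lambda>q. em_flow dt f \<sigma> \<mu> s (a q) (noise_at (r q)) m) \<in> borel_measurable Q"
proof (induction m)
  case 0
  then show ?case using a by simp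
next
  case (Suc m)
  define y where "y q = em_flow dt f \<sigma> \<mu> s (a q) (noise_at (r q)) m" for q
  have y: "y \<in> borel_measurable Q"
    unfolding y_def using Suc by (auto simp: subset_iff)
  have "(\<lambda>q. \<mu> (s + m) (y q)) \<in> borel_measurable Q"
    using measurable_compose[OF y Suc.prems(1)] by simp
  then have "(\<lambda>q. f (real (s + m) * dt) (y q) (\<mu> (s + m) (y q))) \<in> borel_measurable Q"
    by (intro borel_measurable_uncurry3_compose[OF f _ y]) simp_all
  moreover have "(\<lambda>q. \<sigma> (real (s + m) * dt) (y q)) \<in> borel_measurable Q"
    by (intro borel_measurable_uncurry2_compose[OF \<sigma> _ y]) simp
  moreover have "(\<lambda>q. noise_at (r q) (s + m)) \<in> borel_measurable Q"
    by (rule borel_measurable_noise_at[OF r]) (use Suc.prems in auto)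
  ultimately have "(\<lambda>q. y q + dt *\<^sub>R f (real (s + m) * dt) (y q) (\<mu> (s + m) (y q))
      + (sqrt dt *\<^sub>R \<sigma> (real (s + m) * dt) (y q)) *v noise_at (r q) (s + m)) \<in> borel_measurable Q"
    using y by measurable
  then show ?case by (simp add: y_def Let_def)
qed

locale euler_maruyama = prob_space M for M :: "'a measure" +
  fixes dt :: real and N :: nat
    and f :: "real \<Rightarrow> real^'n \<Rightarrow> real^'m \<Rightarrow> real^'n"
    and \<sigma> :: "real \<Rightarrow> real^'n \<Rightarrow> real^'n^'n"
    and \<mu> :: "nat \<Rightarrow> real^'n \<Rightarrow> real^'m"
    and W :: "nat \<Rightarrow> 'a \<Rightarrow> real^'n"
    and x0 :: "real^'n"
  assumes f_meas: "(\<lambda>(t, x, u). f t x u) \<in> borel_measurable borel"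
    and sigma_meas: "(\<lambda>(t, x). \<sigma> t x) \<in> borel_measurable borel"
    and mu_meas: "\<And>j. j < N \<Longrightarrow> \<mu> j \<in> borel_measurable borel"
    and W_meas: "\<And>j. j < N \<Longrightarrow> W j \<in> borel_measurable M"
    and W_gauss: "\<And>j k. j < N \<Longrightarrow> distributed M lborel (\<lambda>\<omega>. W j \<omega> $ k) std_normal_density"
    and W_indep: "indep_vars (\<lambda>_. borel) (\<lambda>(j, k) \<omega>. W j \<omega> $ k) ({..<N} \<times> UNIV)"
begin

abbreviation "X \<equiv> Xpath dt f \<sigma> \<mu> x0 W"

definition "noise_components \<omega> = (\<lambda>(j, k). W j \<omega> $ k)"
definition "past_noise s \<omega> = restrict (noise_components \<omega>) ({..<s} \<times> UNIV)"
definition "future_noise s \<omega> = restrict (noise_components \<omega>) ({s..<N} \<times> UNIV)"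
abbreviation "past_space s \<equiv> PiM ({..<s} \<times> (UNIV::'n set)) (\<lambda>_. borel :: real measure)"
abbreviation "future_space s \<equiv> PiM ({s..<N} \<times> (UNIV::'n set)) (\<lambda>_. borel :: real measure)"

definition "state_of_past s r = em_flow dt f \<sigma> \<mu> 0 x0 (noise_at r) s"

lemma indep_past_future_noise:
  assumes "s \<le> N"
  shows "indep_var (past_space s) (past_noise s) (future_space s) (future_noise s)"
proof -
  have "indep_var (past_space s) (\<lambda>\<omega>. restrict (\<lambda>p. (\<lambda>(j, k) \<omega>. W j \<omega> $ k) p \<omega>) ({..<s} \<times> UNIV))
      (future_space s) (\<lambda>\<omega>. restrict (\<lambda>p. (\<lambda>(j, k) \<omega>. W j \<omega> $ k) p \<omega>) ({s..<N} \<times> UNIV))"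
    by (rule indep_var_restrict[OF W_indep]) (use assms in auto)
  moreover have "(\<lambda>p. (\<lambda>(j, k) \<omega>. W j \<omega> $ k) p \<omega>) = noise_components \<omega>" for \<omega>
    by (auto simp: noise_components_def)
  ultimately show ?thesis unfolding past_noise_def future_noise_def by simp
qed

lemma indep_past_future_functionals:
  assumes "s \<le> N" "\<phi> \<in> measurable (past_space s) S" "\<psi> \<in> measurable (future_space s) T"
  shows "indep_var_distr S (\<lambda>\<omega>. \<phi> (past_noise s \<omega>)) T (\<lambda>\<omega>. \<psi> (future_noise s \<omega>))"
  using indep_var_distr_compose[OF indep_past_future_noise[OF assms(1)] assms(2,3)] .

lemma noise_at_past_noise: "j < s \<Longrightarrow> noise_at (past_noise s \<omega>) j = W j \<omega>"
  by (simp add: noise_at_def past_noise_def noise_components_def vec_eq_iff)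

lemma noise_at_future_noise: "s \<le> j \<Longrightarrow> j < N \<Longrightarrow> noise_at (future_noise s \<omega>) j = W j \<omega>"
  by (simp add: noise_at_def future_noise_def noise_components_def vec_eq_iff)

lemma X_eq_state_of_past:
  assumes "s \<le> t"
  shows "X s \<omega> = state_of_past s (past_noise t \<omega>)"
proof -
  have "X (0 + s) \<omega> = em_flow dt f \<sigma> \<mu> 0 x0 (\<lambda>j. W j \<omega>) s"
    by (subst Xpath_add) simp
  also have "\<dots> = state_of_past s (past_noise t \<omega>)"
    unfolding state_of_past_def by (rule em_flow_cong) (use assms in \<open>simp add: noise_at_past_noise\<close>)
  finally show ?thesis by simp
qed

lemma X_eq_em_flow_future:
  assumes "s \<le> m" "m \<le> N"
  shows "X m \<omega> = em_flow dt f \<sigma> \<mu> s (X s \<omega>) (noise_at (future_noise s \<omega>)) (m - s)"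
proof -
  have "X (s + (m - s)) \<omega> = em_flow dt f \<sigma> \<mu> s (X s \<omega>) (\<lambda>j. W j \<omega>) (m - s)"
    by (rule Xpath_add)
  also have "\<dots> = em_flow dt f \<sigma> \<mu> s (X s \<omega>) (noise_at (future_noise s \<omega>)) (m - s)"
    by (rule em_flow_cong) (use assms in \<open>simp add: noise_at_future_noise\<close>)
  finally show ?thesis using assms by simp
qed

lemma borel_measurable_state_of_past:
  "s \<le> t \<Longrightarrow> t \<le> N \<Longrightarrow> state_of_past s \<in> borel_measurable (past_space t)"
  unfolding state_of_past_def
  by (rule borel_measurable_em_flow[OF f_meas sigma_meas, where s=0 and a="\<lambda>_. x0"
        and r="\<lambda>r. r" and I="{..<t} \<times> UNIV", simplified]) (auto intro: mu_meas)

lemma borel_measurable_X: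
  assumes "s \<le> N"
  shows "X s \<in> borel_measurable M"
proof -
  have "past_noise s \<in> measurable M (past_space s)"
    unfolding past_noise_def noise_components_def
    by (intro measurable_restrict) (use assms in \<open>auto intro!: borel_measurable_vec_nth_compose W_meas\<close>)
  with assms have "(\<lambda>\<omega>. state_of_past s (past_noise s \<omega>)) \<in> borel_measurable M"
    using measurable_compose borel_measurable_state_of_past by blast
  then show ?thesis by (simp add: X_eq_state_of_past[of s s, symmetric])
qed

definition drift_step :: "nat \<Rightarrow> real^'n \<Rightarrow> real^'n" where
  "drift_step i x = x + dt *\<^sub>R f (real i * dt) x (\<mu> i x)"

definition diffusion_step :: "nat \<Rightarrow> real^'n \<Rightarrow> real^'n^'n" where
  "diffusion_step i x = sqrt dt *\<^sub>R \<sigma> (real i * dt) x"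

definition em_step :: "nat \<Rightarrow> real^'n \<Rightarrow> real^'n \<Rightarrow> real^'n" where
  "em_step i x w = drift_step i x + diffusion_step i x *v w"

lemma X_Suc: "X (Suc i) \<omega> = em_step i (X i \<omega>) (W i \<omega>)"
  by (simp add: em_step_def drift_step_def diffusion_step_def Let_def)

lemma borel_measurable_drift_step: "i < N \<Longrightarrow> drift_step i \<in> borel_measurable borel"
  using borel_measurable_uncurry3_compose[OF f_meas, of "\<lambda>_. real i * dt" borel "\<lambda>x. x" "\<mu> i"]
  by (simp add: mu_meas drift_step_def[abs_def])

lemma borel_measurable_diffusion_step: "diffusion_step i \<in> borel_measurable borel"
  using borel_measurable_uncurry2_compose[OF sigma_meas, of "\<lambda>_. real i * dt" borel "\<lambda>x. x"]
  unfolding diffusion_step_def[abs_def] by measurable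

lemma borel_measurable_em_step:
  assumes "i < N"
  shows "(\<lambda>p. em_step i (fst p) (snd p)) \<in> borel_measurable borel"
proof -
  have [measurable]: "drift_step i \<in> borel_measurable borel" "diffusion_step i \<in> borel_measurable borel"
    using assms borel_measurable_drift_step borel_measurable_diffusion_step by simp_all
  have [measurable]: "(fst :: (real^'n) \<times> (real^'n) \<Rightarrow> _) \<in> borel_measurable borel"
    "(snd :: (real^'n) \<times> (real^'n) \<Rightarrow> _) \<in> borel_measurable borel"
    by (simp_all add: borel_measurable_continuous_onI continuous_on_fst continuous_on_snd)
  show ?thesis
    unfolding em_step_def by measurable
qed

lemma indep_X_W:
  assumes "i < N"
  shows "indep_var_distr borel (X i) borel (W i)"
proof -
  have "(\<lambda>r. noise_at r i) \<in> borel_measurable (future_space i)"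
    using assms by (intro borel_measurable_noise_at[OF measurable_ident_sets[OF refl]]) auto
  from indep_past_future_functionals[OF _ borel_measurable_state_of_past[of i i] this] assms
  show ?thesis by (simp add: X_eq_state_of_past[of i i, symmetric] noise_at_future_noise)
qed

lemma indep_X_future_noise:
  assumes "s \<le> N"
  shows "indep_var_distr borel (X s) (future_space s) (future_noise s)"
  using indep_past_future_functionals[OF assms borel_measurable_state_of_past[OF order.refl assms]
      measurable_ident_sets[OF refl]]
  by (simp add: X_eq_state_of_past[of s s, symmetric])

lemma indep_X_W_future_noise:
  assumes "i < N"
  shows "indep_var_distr borel (\<lambda>\<omega>. (X i \<omega>, W i \<omega>)) (future_space (Suc i)) (future_noise (Suc i))"
proof -
  have "(\<lambda>r. (state_of_past i r, noise_at r i)) \<in> borel_measurable (past_space (Suc i))"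
    using assms
    by (intro borel_measurable_Pair borel_measurable_state_of_past
        borel_measurable_noise_at[OF measurable_ident_sets[OF refl]]) auto
  from indep_past_future_functionals[OF _ this measurable_ident_sets[OF refl]] assms
  show ?thesis by (simp add: X_eq_state_of_past[of i "Suc i", symmetric] noise_at_past_noise)
qed

lemma cond_exp_quadratic_in_noise:
  fixes a :: "real^'n \<Rightarrow> real" and z :: "real^'n \<Rightarrow> real^'n" and A :: "real^'n \<Rightarrow> real^'n^'n"
  assumes i: "i < N"
    and [measurable]: "a \<in> borel_measurable borel" "z \<in> borel_measurable borel" "A \<in> borel_measurable borel"
    and int: "integrable M (\<lambda>\<omega>. a (X i \<omega>) + z (X i \<omega>) \<bullet> W i \<omega> + 1/2 * (W i \<omega> \<bullet> (A (X i \<omega>) *v W i \<omega>)))"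
  shows "AE \<omega> in M. cond_exp_given M (X i)
            (\<lambda>\<omega>. a (X i \<omega>) + z (X i \<omega>) \<bullet> W i \<omega> + 1/2 * (W i \<omega> \<bullet> (A (X i \<omega>) *v W i \<omega>))) \<omega>
          = a (X i \<omega>) + 1/2 * trace (A (X i \<omega>))"
proof -
  define h where "h p = a (fst p) + z (fst p) \<bullet> snd p + 1/2 * (snd p \<bullet> (A (fst p) *v snd p))"
    for p :: "(real^'n) \<times> (real^'n)"
  have [measurable]: "W i \<in> borel_measurable M" using W_meas i by simp
  have normal: "distributed M lborel (\<lambda>\<omega>. W i \<omega> $ k) std_normal_density" for k
    using W_gauss i by simp
  have "indep_var borel (\<lambda>\<omega>. W i \<omega> $ k) borel (\<lambda>\<omega>. W i \<omega> $ l)" if "k \<noteq> l" for k l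
    using indep_var_compose[OF indep_var_restrict[OF W_indep, of "{(i, k)}" "{(i, l)}"]
        measurable_component_singleton measurable_component_singleton] i that
    by (simp add: comp_def)
  note quadratic = std_normal_vector_quadratic[OF normal this]
  have "(\<integral>w. h (x, w) \<partial>distr M borel (W i)) = a x + 1/2 * trace (A x)" for x
  proof -
    have "(\<integral>w. h (x, w) \<partial>distr M borel (W i)) = expectation (\<lambda>\<omega>. h (x, W i \<omega>))"
      by (rule integral_distr) (simp_all add: h_def)
    also have "\<dots> = a x + 1/2 * trace (A x)"
      unfolding h_def fst_conv snd_conv by (rule quadratic(2))
    finally show ?thesis .
  qed
  moreover have "h \<in> borel_measurable (borel \<Otimes>\<^sub>M borel)" unfolding h_def by measurable
  ultimately show ?thesis
    using real_cond_exp_vimage_indep[OF indep_X_W[OF i], of h] int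
    unfolding cond_exp_given_def h_def by simp
qed

lemma cond_exp_second_order_expansion:
  fixes V :: "real^'n \<Rightarrow> real" and DV :: "real^'n \<Rightarrow> real^'n" and HV :: "real^'n \<Rightarrow> real^'n^'n"
  assumes i: "i < N" and [measurable]: "V \<in> borel_measurable borel" "DV \<in> borel_measurable borel"
    "HV \<in> borel_measurable borel"
  defines "Q x \<equiv> transpose (diffusion_step i x) ** HV (drift_step i x) ** diffusion_step i x"
  assumes int: "integrable M (\<lambda>\<omega>. V (drift_step i (X i \<omega>))
    + (transpose (diffusion_step i (X i \<omega>)) *v DV (drift_step i (X i \<omega>))) \<bullet> W i \<omega>
    + 1/2 * (W i \<omega> \<bullet> (Q (X i \<omega>) *v W i \<omega>)))"
  shows "AE \<omega> in M. cond_exp_given M (X i) (\<lambda>\<omega>. V (drift_step i (X i \<omega>))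
    + (transpose (diffusion_step i (X i \<omega>)) *v DV (drift_step i (X i \<omega>))) \<bullet> W i \<omega>
    + 1/2 * (W i \<omega> \<bullet> (Q (X i \<omega>) *v W i \<omega>))) \<omega> = V (drift_step i (X i \<omega>)) + 1/2 * trace (Q (X i \<omega>))"
proof -
  have [measurable]: "drift_step i \<in> borel_measurable borel" "diffusion_step i \<in> borel_measurable borel"
    using i borel_measurable_drift_step borel_measurable_diffusion_step by simp_all
  have "Q \<in> borel_measurable borel"
    unfolding Q_def[abs_def] by measurable
  moreover have "(\<lambda>x. V (drift_step i x)) \<in> borel_measurable borel"
    by measurable
  moreover have "(\<lambda>x. transpose (diffusion_step i x) *v DV (drift_step i x)) \<in> borel_measurable borel"
    by measurable
  ultimately show ?thesis
    using cond_exp_quadratic_in_noise[OF i, of "\<lambda>x. V (drift_step i x)"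
        "\<lambda>x. transpose (diffusion_step i x) *v DV (drift_step i x)" Q] int
    by simp
qed

(* X_{i+1} is a function of (X_i, W_i), and conditioning on either amounts to integrating out
   the noise after step i. *)
lemma cond_exp_next_state_functional:
  fixes h :: "(real^'n) \<times> (nat \<times> 'n \<Rightarrow> real) \<Rightarrow> real"
  assumes i: "i < N" and h[measurable]: "h \<in> borel_measurable (borel \<Otimes>\<^sub>M future_space (Suc i))"
    and int: "integrable M (\<lambda>\<omega>. h (X (Suc i) \<omega>, future_noise (Suc i) \<omega>))"
  shows "AE \<omega> in M. cond_exp_given M (X (Suc i)) (\<lambda>\<omega>. h (X (Suc i) \<omega>, future_noise (Suc i) \<omega>)) \<omega>
      = cond_exp_given M (\<lambda>\<omega>. (X i \<omega>, W i \<omega>)) (\<lambda>\<omega>. h (X (Suc i) \<omega>, future_noise (Suc i) \<omega>)) \<omega>"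
proof -
  let ?P = "distr M (future_space (Suc i)) (future_noise (Suc i))"
  have "(\<lambda>q. (em_step i (fst (fst q)) (snd (fst q)), snd q))
      \<in> measurable (borel \<Otimes>\<^sub>M future_space (Suc i)) (borel \<Otimes>\<^sub>M future_space (Suc i))"
    by (intro measurable_Pair measurable_compose[OF measurable_fst borel_measurable_em_step[OF i]]
        measurable_snd)
  from measurable_compose[OF this h]
  have "(\<lambda>q. h (em_step i (fst (fst q)) (snd (fst q)), snd q))
      \<in> borel_measurable (borel \<Otimes>\<^sub>M future_space (Suc i))"
    by simp
  from real_cond_exp_vimage_indep[OF indep_X_W_future_noise[OF i] this]
  have "AE \<omega> in M. cond_exp_given M (\<lambda>\<omega>. (X i \<omega>, W i \<omega>))
      (\<lambda>\<omega>. h (X (Suc i) \<omega>, future_noise (Suc i) \<omega>)) \<omega> = (\<integral>r. h (X (Suc i) \<omega>, r) \<partial>?P)"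
    using int unfolding cond_exp_given_def X_Suc by simp
  moreover have "AE \<omega> in M. cond_exp_given M (X (Suc i))
      (\<lambda>\<omega>. h (X (Suc i) \<omega>, future_noise (Suc i) \<omega>)) \<omega> = (\<integral>r. h (X (Suc i) \<omega>, r) \<partial>?P)"
    using real_cond_exp_vimage_indep[OF indep_X_future_noise[OF Suc_leI[OF i]] h] int
    unfolding cond_exp_given_def .
  ultimately show ?thesis by auto
qed

lemma markov_tower_next_state:
  fixes h :: "(real^'n) \<times> (nat \<times> 'n \<Rightarrow> real) \<Rightarrow> real"
  assumes i: "i < N" and h: "h \<in> borel_measurable (borel \<Otimes>\<^sub>M future_space (Suc i))"
    and int: "integrable M (\<lambda>\<omega>. h (X (Suc i) \<omega>, future_noise (Suc i) \<omega>))"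
  shows "AE \<omega> in M. cond_exp_given M (X i)
            (cond_exp_given M (X (Suc i)) (\<lambda>\<omega>. h (X (Suc i) \<omega>, future_noise (Suc i) \<omega>))) \<omega>
          = cond_exp_given M (X i) (\<lambda>\<omega>. h (X (Suc i) \<omega>, future_noise (Suc i) \<omega>)) \<omega>"
proof -
  define C where "C \<omega> = h (X (Suc i) \<omega>, future_noise (Suc i) \<omega>)" for \<omega>
  have [measurable]: "X i \<in> borel_measurable M" "W i \<in> borel_measurable M"
    using i borel_measurable_X W_meas by simp_all
  interpret F0: sigma_finite_subalgebra M "vimage_algebra (space M) (X i) borel"
    by (rule sigma_finite_subalgebra_vimage_algebra) simp
  have "AE \<omega> in M. cond_exp_given M (X i) (cond_exp_given M (X (Suc i)) C) \<omega>
      = cond_exp_given M (X i) (cond_exp_given M (\<lambda>\<omega>. (X i \<omega>, W i \<omega>)) C) \<omega>"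
    using cond_exp_next_state_functional[OF assms] unfolding cond_exp_given_def C_def
    by (intro F0.real_cond_exp_cong) simp_all
  moreover have "AE \<omega> in M. cond_exp_given M (X i) (cond_exp_given M (\<lambda>\<omega>. (X i \<omega>, W i \<omega>)) C) \<omega>
      = cond_exp_given M (X i) C \<omega>"
    using real_cond_exp_vimage_tower[of "\<lambda>\<omega>. (X i \<omega>, W i \<omega>)" borel fst borel C] int
    unfolding cond_exp_given_def C_def by (simp add: borel_prod[symmetric])
  ultimately show ?thesis unfolding C_def by auto
qed

definition cost_to_go :: "(real \<Rightarrow> real^'n \<Rightarrow> real^'m \<Rightarrow> real) \<Rightarrow> (real^'n \<Rightarrow> real) \<Rightarrow> nat \<Rightarrow> 'a \<Rightarrow> real"
  where "cost_to_go ell g j \<omega> = (\<Sum>k\<in>{j..<N}. ell (real k * dt) (X k \<omega>) (\<mu> k (X k \<omega>)) * dt) + g (X N \<omega>)"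

lemma cost_to_go_future_functional:
  fixes ell :: "real \<Rightarrow> real^'n \<Rightarrow> real^'m \<Rightarrow> real" and g :: "real^'n \<Rightarrow> real"
  assumes s: "s \<le> N" and ell: "(\<lambda>(t, x, u). ell t x u) \<in> borel_measurable borel"
    and g: "g \<in> borel_measurable borel"
  obtains h where "h \<in> borel_measurable (borel \<Otimes>\<^sub>M future_space s)"
    and "\<And>\<omega>. cost_to_go ell g s \<omega> = h (X s \<omega>, future_noise s \<omega>)"
proof
  define flow where "flow p m = em_flow dt f \<sigma> \<mu> s (fst p) (noise_at (snd p)) m" for p m
  have flow: "(\<lambda>p. flow p (k - s)) \<in> borel_measurable (borel \<Otimes>\<^sub>M future_space s)" if "k \<le> N" for k
    unfolding flow_def
    by (rule borel_measurable_em_flow[OF f_meas sigma_meas, where a=fst and r=snd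
          and I="{s..<N} \<times> UNIV"]) (use that s in \<open>auto intro: mu_meas\<close>)
  show "(\<lambda>p. (\<Sum>k\<in>{s..<N}. ell (real k * dt) (flow p (k - s)) (\<mu> k (flow p (k - s))) * dt)
      + g (flow p (N - s))) \<in> borel_measurable (borel \<Otimes>\<^sub>M future_space s)"
  proof (intro borel_measurable_add borel_measurable_sum borel_measurable_times)
    fix k assume "k \<in> {s..<N}"
    then show "(\<lambda>p. ell (real k * dt) (flow p (k - s)) (\<mu> k (flow p (k - s))))
        \<in> borel_measurable (borel \<Otimes>\<^sub>M future_space s)"
      using flow[of k] measurable_compose[OF flow[of k] mu_meas[of k]]
      by (intro borel_measurable_uncurry3_compose[OF ell]) auto
  qed (use measurable_compose[OF flow[of N] g] in simp_all)
  fix \<omega>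
  have X_flow: "X k \<omega> = flow (X s \<omega>, future_noise s \<omega>) (k - s)" if "s \<le> k" "k \<le> N" for k
    unfolding flow_def using X_eq_em_flow_future[OF that] by simp
  have "(\<Sum>k\<in>{s..<N}. ell (real k * dt) (X k \<omega>) (\<mu> k (X k \<omega>)) * dt)
      = (\<Sum>k\<in>{s..<N}. ell (real k * dt) (flow (X s \<omega>, future_noise s \<omega>) (k - s))
          (\<mu> k (flow (X s \<omega>, future_noise s \<omega>) (k - s))) * dt)"
  proof (rule sum.cong[OF refl])
    fix k assume "k \<in> {s..<N}"
    then have "X k \<omega> = flow (X s \<omega>, future_noise s \<omega>) (k - s)" by (intro X_flow) auto
    then show "ell (real k * dt) (X k \<omega>) (\<mu> k (X k \<omega>)) * dt = ell (real k * dt)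
        (flow (X s \<omega>, future_noise s \<omega>) (k - s)) (\<mu> k (flow (X s \<omega>, future_noise s \<omega>) (k - s))) * dt"
      by (simp only:)
  qed
  moreover have "X N \<omega> = flow (X s \<omega>, future_noise s \<omega>) (N - s)"
    using s by (rule X_flow) simp
  ultimately show "cost_to_go ell g s \<omega> = (\<Sum>k\<in>{s..<N}. ell (real k * dt)
      (flow (X s \<omega>, future_noise s \<omega>) (k - s)) (\<mu> k (flow (X s \<omega>, future_noise s \<omega>) (k - s))) * dt)
      + g (flow (X s \<omega>, future_noise s \<omega>) (N - s))"
    unfolding cost_to_go_def by (simp only:)
qed

lemma cond_exp_next_cost_to_go:
  fixes ell :: "real \<Rightarrow> real^'n \<Rightarrow> real^'m \<Rightarrow> real" and g :: "real^'n \<Rightarrow> real"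
  assumes i: "i < N" and ell: "(\<lambda>(t, x, u). ell t x u) \<in> borel_measurable borel"
    and g: "g \<in> borel_measurable borel"
    and int: "integrable M (cost_to_go ell g i)" "integrable M (cost_to_go ell g (Suc i))"
  shows "AE \<omega> in M. cond_exp_given M (X i) (cond_exp_given M (X (Suc i)) (cost_to_go ell g (Suc i))) \<omega>
      = cond_exp_given M (X i) (cost_to_go ell g i) \<omega> - ell (real i * dt) (X i \<omega>) (\<mu> i (X i \<omega>)) * dt"
proof -
  define F0 where "F0 = vimage_algebra (space M) (X i) borel"
  define L where "L \<omega> = ell (real i * dt) (X i \<omega>) (\<mu> i (X i \<omega>)) * dt" for \<omega>
  interpret F0: sigma_finite_subalgebra M F0
    unfolding F0_def using i by (intro sigma_finite_subalgebra_vimage_algebra borel_measurable_X) simp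
  have split: "cost_to_go ell g i = (\<lambda>\<omega>. L \<omega> + cost_to_go ell g (Suc i) \<omega>)"
    by (rule ext) (simp add: cost_to_go_def L_def sum.atLeast_Suc_lessThan[OF i])
  have int_L: "integrable M L"
    using Bochner_Integration.integrable_diff[OF int] by (simp add: split)
  have L_F0: "L \<in> borel_measurable F0"
  proof -
    have "(\<lambda>x. ell (real i * dt) x (\<mu> i x) * dt) \<in> borel_measurable borel"
      using i mu_meas
      by (intro borel_measurable_times borel_measurable_uncurry3_compose[OF ell]) simp_all
    from measurable_compose[OF measurable_vimage_algebra1 this] show ?thesis
      unfolding L_def F0_def by simp
  qed
  have "AE \<omega> in M. real_cond_exp M F0 (cost_to_go ell g i) \<omega>
      = L \<omega> + real_cond_exp M F0 (cost_to_go ell g (Suc i)) \<omega>"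
    using F0.real_cond_exp_add[OF int_L int(2)] F0.real_cond_exp_F_meas[OF int_L L_F0]
    unfolding split by auto
  moreover obtain h where h: "h \<in> borel_measurable (borel \<Otimes>\<^sub>M future_space (Suc i))"
    and h_eq: "\<And>\<omega>. cost_to_go ell g (Suc i) \<omega> = h (X (Suc i) \<omega>, future_noise (Suc i) \<omega>)"
    using cost_to_go_future_functional[OF Suc_leI[OF i] ell g] by blast
  have "cost_to_go ell g (Suc i) = (\<lambda>\<omega>. h (X (Suc i) \<omega>, future_noise (Suc i) \<omega>))"
    using h_eq by (simp add: fun_eq_iff)
  then have "AE \<omega> in M. real_cond_exp M F0 (cond_exp_given M (X (Suc i)) (cost_to_go ell g (Suc i))) \<omega>
      = real_cond_exp M F0 (cost_to_go ell g (Suc i)) \<omega>"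
    using markov_tower_next_state[OF i h] int(2) unfolding F0_def cond_exp_given_def by simp
  ultimately show ?thesis
    unfolding cond_exp_given_def F0_def[symmetric] L_def by auto
qed

end

theorem theorem3p1:
  fixes M :: "'a measure"
    and dt :: real and N :: nat and i :: nat
    and U :: "(real^'m) set"
    and f :: "real \<Rightarrow> real^'n \<Rightarrow> real^'m \<Rightarrow> real^'n"
    and \<sigma> :: "real \<Rightarrow> real^'n \<Rightarrow> real^'n^'n"
    and ell :: "real \<Rightarrow> real^'n \<Rightarrow> real^'m \<Rightarrow> real"
    and g :: "real^'n \<Rightarrow> real"
    and \<mu> :: "nat \<Rightarrow> real^'n \<Rightarrow> real^'m"
    and W :: "nat \<Rightarrow> 'a \<Rightarrow> real^'n"
    and x0 :: "real^'n"
    and Vt :: "real^'n \<Rightarrow> real"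
    and DVt :: "real^'n \<Rightarrow> real^'n"
    and HVt :: "real^'n \<Rightarrow> real^'n^'n"
    and X :: "nat \<Rightarrow> 'a \<Rightarrow> real^'n"
    and L :: "nat \<Rightarrow> 'a \<Rightarrow> real"
    and Y :: "nat \<Rightarrow> 'a \<Rightarrow> real"
    and \<Delta>Y Ybar Ytil \<delta>hot \<delta>V \<delta> \<Delta>Yhat :: "'a \<Rightarrow> real"
    and Xbar Zbar :: "'a \<Rightarrow> real^'n"
    and Mbar :: "'a \<Rightarrow> real^'n^'n"
  assumes P: "prob_space M"
    and dt_pos: "dt > 0"
    and i_lt: "i < N"
    and mu_U: "\<And>j x. j < N \<Longrightarrow> \<mu> j x \<in> U"
    and ell_nonneg: "\<And>t x u. ell t x u \<ge> 0"
    and g_nonneg: "\<And>x. g x \<ge> 0"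
    and f_meas: "(\<lambda>(t, x, u). f t x u) \<in> borel_measurable borel"
    and sigma_meas: "(\<lambda>(t, x). \<sigma> t x) \<in> borel_measurable borel"
    and ell_meas: "(\<lambda>(t, x, u). ell t x u) \<in> borel_measurable borel"
    and g_meas: "g \<in> borel_measurable borel"
    and mu_meas: "\<And>j. j < N \<Longrightarrow> \<mu> j \<in> borel_measurable borel"
    and W_meas: "\<And>j. j < N \<Longrightarrow> W j \<in> borel_measurable M"
    and W_gauss: "\<And>j k. j < N \<Longrightarrow> distributed M lborel (\<lambda>\<omega>. W j \<omega> $ k) std_normal_density"
    and W_indep: "prob_space.indep_vars M (\<lambda>_. borel) (\<lambda>(j, k) \<omega>. W j \<omega> $ k) ({..<N} \<times> UNIV)"
    and Vt_D: "\<And>x. (Vt has_derivative (\<lambda>h. DVt x \<bullet> h)) (at x)"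
    and DVt_D: "\<And>x. (DVt has_derivative (\<lambda>h. HVt x *v h)) (at x)"
    and HVt_cont: "continuous_on UNIV HVt"
    and X_def: "X \<equiv> Xpath dt f \<sigma> \<mu> x0 W"
    and L_def: "L \<equiv> (\<lambda>j \<omega>. ell (real j * dt) (X j \<omega>) (\<mu> j (X j \<omega>)) * dt)"
    and Y_def: "Y \<equiv> (\<lambda>j. cond_exp_given M (X j) (\<lambda>\<omega>. (\<Sum>k\<in>{j..<N}. L k \<omega>) + g (X N \<omega>)))"
    and \<Delta>Y_def: "\<Delta>Y \<equiv> (\<lambda>\<omega>. Y (Suc i) \<omega> - Y i \<omega>)"
    and Xbar_def: "Xbar \<equiv> (\<lambda>\<omega>. X i \<omega> + dt *\<^sub>R f (real i * dt) (X i \<omega>) (\<mu> i (X i \<omega>)))"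
    and Ybar_def: "Ybar \<equiv> (\<lambda>\<omega>. Vt (Xbar \<omega>))"
    and Zbar_def: "Zbar \<equiv> (\<lambda>\<omega>. transpose (sqrt dt *\<^sub>R \<sigma> (real i * dt) (X i \<omega>))
                      *v DVt (Xbar \<omega>))"
    and Mbar_def: "Mbar \<equiv> (\<lambda>\<omega>. transpose (sqrt dt *\<^sub>R \<sigma> (real i * dt) (X i \<omega>))
                      ** HVt (Xbar \<omega>)
                      ** (sqrt dt *\<^sub>R \<sigma> (real i * dt) (X i \<omega>)))"
    and Ytil_def: "Ytil \<equiv> (\<lambda>\<omega>. Ybar \<omega> + Zbar \<omega> \<bullet> W i \<omega> + (1/2) * (W i \<omega> \<bullet> (Mbar \<omega> *v W i \<omega>)))"
    and \<delta>hot_def: "\<delta>hot \<equiv> (\<lambda>\<omega>. Vt (X (Suc i) \<omega>) - Ytil \<omega>)"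
    and \<delta>V_def: "\<delta>V \<equiv> (\<lambda>\<omega>. Y (Suc i) \<omega> - Vt (X (Suc i) \<omega>))"
    and \<delta>_def: "\<delta> \<equiv> (\<lambda>\<omega>. \<delta>V \<omega> + \<delta>hot \<omega>)"
    and \<Delta>Yhat_def: "\<Delta>Yhat \<equiv> (\<lambda>\<omega>. - L i \<omega> + Zbar \<omega> \<bullet> W i \<omega>
                      + (1/2) * trace (Mbar \<omega> ** (outer (W i \<omega>) (W i \<omega>) - mat 1)))"
    and int_cost: "\<And>j. j \<in> {i, Suc i} \<Longrightarrow>
                    integrable M (\<lambda>\<omega>. (\<Sum>k\<in>{j..<N}. L k \<omega>) + g (X N \<omega>))"
    and int_\<Delta>Y: "integrable M \<Delta>Y"
    and int_\<Delta>Yhat: "integrable M \<Delta>Yhat"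
    and int_\<delta>: "integrable M \<delta>"
  shows "(AE \<omega> in M. cond_exp_given M (X i) \<Delta>Yhat \<omega> = cond_exp_given M (X i) \<Delta>Y \<omega>)
       \<and> (AE \<omega> in M. \<Delta>Y \<omega> - \<Delta>Yhat \<omega> = \<delta> \<omega> - cond_exp_given M (X i) \<delta> \<omega>)"
proof -
  interpret EM: euler_maruyama M dt N f \<sigma> \<mu> W x0
    using P f_meas sigma_meas mu_meas W_meas W_gauss W_indep
    by (simp add: euler_maruyama_def euler_maruyama_axioms_def)
  interpret F0: sigma_finite_subalgebra M "vimage_algebra (space M) (X i) borel"
    unfolding X_def using i_lt by (intro EM.sigma_finite_subalgebra_vimage_algebra EM.borel_measurable_X) simp
  have cost: "(\<lambda>\<omega>. (\<Sum>k\<in>{j..<N}. L k \<omega>) + g (X N \<omega>)) = EM.cost_to_go ell g j" for j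
    unfolding L_def X_def EM.cost_to_go_def by simp
  have Y: "Y = (\<lambda>j. cond_exp_given M (X j) (EM.cost_to_go ell g j))"
    unfolding Y_def cost ..
  have int_Y: "integrable M (Y (Suc i))"
    unfolding Y cond_exp_given_def X_def using i_lt int_cost[of "Suc i", unfolded cost]
    by (intro sigma_finite_subalgebra.real_cond_exp_int(1) EM.sigma_finite_subalgebra_vimage_algebra
        EM.borel_measurable_X) simp_all
  have \<delta>: "\<delta> = (\<lambda>\<omega>. Y (Suc i) \<omega> - Ytil \<omega>)"
    unfolding \<delta>_def \<delta>V_def \<delta>hot_def by (simp add: fun_eq_iff)
  have int_Ytil: "integrable M Ytil"
    using Bochner_Integration.integrable_diff[OF int_Y int_\<delta>] by (simp add: \<delta>)
  have "AE \<omega> in M. cond_exp_given M (X i) (Y (Suc i)) \<omega> = Y i \<omega> - L i \<omega>"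
    using EM.cond_exp_next_cost_to_go[OF i_lt ell_meas g_meas int_cost[of i, unfolded cost]
        int_cost[of "Suc i", unfolded cost]]
    unfolding Y X_def L_def by simp
  moreover have "AE \<omega> in M. cond_exp_given M (X i) Ytil \<omega> = Ybar \<omega> + 1/2 * trace (Mbar \<omega>)"
    using EM.cond_exp_second_order_expansion[OF i_lt borel_measurable_has_derivative[OF Vt_D]
        borel_measurable_has_derivative[OF DVt_D] borel_measurable_continuous_onI[OF HVt_cont]]
      int_Ytil
    unfolding Ytil_def Ybar_def Zbar_def Mbar_def Xbar_def X_def EM.drift_step_def EM.diffusion_step_def
    by simp
  ultimately have "AE \<omega> in M. \<Delta>Y \<omega> - \<Delta>Yhat \<omega> = \<delta> \<omega> - cond_exp_given M (X i) \<delta> \<omega>"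
    using F0.real_cond_exp_diff[OF int_Y int_Ytil]
    unfolding \<Delta>Y_def \<Delta>Yhat_def \<delta> Ytil_def cond_exp_given_def
    by (auto simp: trace_mult_outer_minus_id algebra_simps)
  with F0.real_cond_exp_eq_of_centred_residual[OF int_\<Delta>Y int_\<Delta>Yhat int_\<delta>] show ?thesis
    unfolding cond_exp_given_def by auto
qed

end
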